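(* Let $k>4$ be an even integer. Assume that when the procedure $\mathrm{Permutations}$ is run on the list $(0,1,2,\dots,k-1)$ (i.e. $\mathrm{Permutations}(L,0,\mathrm{Func})$ with $L=(0,1,\dots,k-1)$), the last permutation it produces is $(1,4,3,5,6,7,8,\dots,k-1,2,0)$ (and, correspondingly, for any list of $k$ pairwise distinct elements $(x_0,\dots,x_{k-1})$ the last permutation produced is $(x_1,x_4,x_3,x_5,x_6,\dots,x_{k-1},x_2,x_0)$). Then, when $\mathrm{Permutations}$ is run on the list $(0,1,2,\dots,k)$ of $k+1$ elements, each of the $k+1$ elements is inserted exactly once at the beginning of the list (i.e. the $k+1$ recursive calls $\mathrm{Permutations}(L,1,\mathrm{Func})$ made by the top-level invocation are made with pairwise distinct elements at position $0$), and the last permutation produced is $(1,0,2,3,4,\dots,k)$, the initial sequence with its first two elements swapped.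
   Context: Lists are 0-indexed. For a list $L$, $\mathrm{extract}(L,j)$ removes the element at position $j$ from $L$ and returns it; $\mathrm{Insert}(L,i,x)$ inserts $x$ into $L$ so that it occupies position $i$, shifting the elements previously at positions $\ge i$ one step to the right. Each combined operation $\mathrm{Insert}(L,i,\mathrm{extract}(L,j))$ first extracts, then inserts, so the length of $L$ is unchanged. The recursive procedure $\mathrm{Permutations}(L,i,\mathrm{Func})$ (with $\mathrm{Func}$ a callback) is: let $n=\mathrm{length}(L)$. If $i\ge n-1$, call $\mathrm{Func}(L)$. Otherwise: (1) call $\mathrm{Permutations}(L,i+1,\mathrm{Func})$; (2) do $\mathrm{Insert}(L,i,\mathrm{extract}(L,i+1))$ and call $\mathrm{Permutations}(L,i+1,\mathrm{Func})$; (3) repeat $\max(n-i-3,0)$ times: if $n-i$ is even, do $\mathrm{Insert}(L,i,\mathrm{extract}(L,n-1))$, otherwise do $\mathrm{Insert}(L,i,\mathrm{extract}(L,i+1))$; then call $\mathrm{Permutations}(L,i+1,\mathrm{Func})$; (4) if $n-i>2$: do $\mathrm{Insert}(L,i,\mathrm{extract}(L,i+1))$ and call $\mathrm{Permutations}(L,i+1,\mathrm{Func})$. The main call is $\mathrm{Permutations}(L,0,\mathrm{Func})$; each list passed to $\mathrm{Func}$ is a "produced permutation". A call $\mathrm{Permutations}(L,i,\mathrm{Func})$ modifies only positions $\ge i$, and its effect on that suffix depends only on the suffix length $n-i$ (so the assumed behaviour on $(0,\dots,k-1)$ determines a fixed rearrangement applied to any suffix of length $k$). The "last permutation produced" when run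 on a list is the state of the list when the main call returns (which equals the argument of the last call to $\mathrm{Func}$). *)

theory Defs
  imports Main
begin

text \<open>Insert(L, i, extract(L, j)): remove the element at position j, then insert it
  so that it occupies position i.\<close>
definition move_elem :: "nat \<Rightarrow> nat \<Rightarrow> 'a list \<Rightarrow> 'a list" where
  "move_elem i j L = (let x = L ! j; L' = take j L @ drop (Suc j) L
                      in take i L' @ [x] @ drop i L')"

text \<open>perms n i L: the state of the list after Permutations(L, i, Func) returns,
  where n is the (invariant) length of the list.  The callback does not modify L.\<close>
function perms :: "nat \<Rightarrow> nat \<Rightarrow> 'a list \<Rightarrow> 'a list" where
  "perms n i L =
    (if n - 1 \<le> i then L else
     (let L2 = perms n (Suc i) (move_elem i (Suc i) (perms n (Suc i) L));
          L3 = fold (\<lambda>_ M. perms n (Suc i)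
                        (if even (n - i) then move_elem i (n - 1) M else move_elem i (Suc i) M))
                    [0..<(n - i - 3)] L2
      in if n - i > 2 then perms n (Suc i) (move_elem i (Suc i) L3) else L3))"
  by pat_completeness auto
termination by (relation "measure (\<lambda>(n, i, L). n - i)") auto

text \<open>The list of arguments with which Permutations(L, i, Func) calls
  Permutations(\<cdot>, i+1, Func) (in order), for n - 1 > i.\<close>
definition perms_calls :: "nat \<Rightarrow> nat \<Rightarrow> 'a list \<Rightarrow> 'a list list" where
  "perms_calls n i L =
    (let P = perms n (Suc i);
         s = (\<lambda>M. if even (n - i) then move_elem i (n - 1) M else move_elem i (Suc i) M);
         c2 = move_elem i (Suc i) (P L);
         loop = map (\<lambda>j. ((s \<circ> P) ^^ j) c2) [0..<Suc (n - i - 3)]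
     in L # loop @ (if n - i > 2 then [move_elem i (Suc i) (P (last loop))] else []))"

definition last_perm :: "'a list \<Rightarrow> 'a list" where
  "last_perm L = perms (length L) 0 L"

end

theory Submission
  imports Defs
begin

(* The top-level call on k + 1 elements (k + 1 odd) is a sequence of rounds R = "run the
   level-1 call, then swap positions 0 and 1": its k + 1 level-1 calls receive R^j L for
   j = 0..k, and its result is the level-1 run on R^k L, i.e. R^(k+1) L with the last swap
   undone.  Since the procedure only moves positions, R acts on every list by one fixed
   permutation of positions, which the hypothesis on k elements identifies as a single
   (k+1)-cycle.  So the heads of the R^j L run through the orbit of position 0 without
   repetition, and R^(k+1) L = L. *)

declare perms.simps [simp del]

lemma move_elem_Cons_Suc: "move_elem (Suc i) (Suc j) (x # L) = x # move_elem i j L"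
  by (simp add: move_elem_def Let_def)

lemma move_elem_map:
  "j < length L \<Longrightarrow> move_elem i j (map f L) = map f (move_elem i j L)"
  by (simp add: move_elem_def Let_def take_map drop_map)

lemma length_move_elem: "j < length L \<Longrightarrow> length (move_elem i j L) = length L"
  by (simp add: move_elem_def Let_def)

lemma move_elem_0_1: "move_elem 0 (Suc 0) (a # b # L) = b # a # L"
  by (simp add: move_elem_def)

lemma move_elem_0_1_involutive:
  "Suc 0 < length L \<Longrightarrow> move_elem 0 (Suc 0) (move_elem 0 (Suc 0) L) = L"
  by (cases L rule: remdups_adj.cases) (auto simp: move_elem_def)

lemma fold_const_eq_funpow: "fold (\<lambda>_. f) xs = f ^^ length xs"
  by (induction xs) (simp_all add: fun_eq_iff funpow_swap1)

lemma funpow_semiconj: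
  assumes "\<And>y. f (h y) = h (g y)"
  shows "(f ^^ m) (h y) = h ((g ^^ m) y)"
  using assms by (induction m) simp_all

lemma funpow_related:
  assumes "\<And>x y. R x y \<Longrightarrow> R (f x) (g y)" and "R x y"
  shows "R ((f ^^ m) x) ((g ^^ m) y)"
  using assms by (induction m) simp_all

lemma funpow_Suc_Suc: "f ((f ^^ m) (f x)) = (f ^^ Suc (Suc m)) x"
  by (simp add: funpow_swap1)

lemma perms_eq_if_le: "n - 1 \<le> i \<Longrightarrow> perms n i L = L"
  by (subst perms.simps) simp

lemma perms_unfold:
  assumes "i < n - 1"
  shows "perms n i L =
    (let P = perms n (Suc i);
         s = (\<lambda>M. if even (n - i) then move_elem i (n - 1) M else move_elem i (Suc i) M);
         M = ((P \<circ> s) ^^ (n - i - 3)) (P (move_elem i (Suc i) (P L)))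
     in if 2 < n - i then P (move_elem i (Suc i) M) else M)"
  using assms by (subst perms.simps) (simp add: Let_def fold_const_eq_funpow comp_def)

lemma perms_related:
  assumes move: "\<And>a b L M. a < n \<Longrightarrow> b < n \<Longrightarrow> R L M
      \<Longrightarrow> R (move_elem a b L) (move_elem a b M)"
  shows "R L M \<Longrightarrow> R (perms n i L) (perms n i M)"
proof (induction "n - i" arbitrary: i L M rule: less_induct)
  case less
  show ?case
  proof (cases "i < n - 1")
    case False
    with less.prems show ?thesis by (simp add: perms_eq_if_le)
  next
    case True
    let ?P = "perms n (Suc i)"
    let ?s = "\<lambda>M. if even (n - i) then move_elem i (n - 1) M else move_elem i (Suc i) M"
    have P: "R (?P L) (?P M)" if "R L M" for L M
      using less.hyps[of "Suc i"] True that by simp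
    have move_i: "R (move_elem i j L) (move_elem i j M)" if "R L M" "j < n" for j L M
      using move True that by simp
    have s: "R (?s L) (?s M)" if "R L M" for L M
      using True that by (simp add: move_i)
    have "R (((?P \<circ> ?s) ^^ m) L) (((?P \<circ> ?s) ^^ m) M)" if "R L M" for m L M
      by (rule funpow_related[where R = R, OF _ that]) (unfold comp_apply, rule P, rule s)
    with True less.prems show ?thesis
      unfolding perms_unfold[OF True, of L] perms_unfold[OF True, of M] Let_def
      by (simp add: P move_i)
  qed
qed

lemma length_perms: "length L = n \<Longrightarrow> length (perms n i L) = n"
  by (rule perms_related[where R = "\<lambda>L _. length L = n"]) (auto simp: length_move_elem)

lemma perms_map:
  assumes "length L = n"
  shows "perms n i (map f L) = map f (perms n i L)"
proof -
  have "length (perms n i L) = n \<and> perms n i (map f L) = map f (perms n i L)"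
    by (rule perms_related[where R = "\<lambda>L M. length L = n \<and> M = map f L"])
      (use assms in \<open>auto simp: length_move_elem move_elem_map\<close>)
  then show ?thesis ..
qed

lemma perms_eq_map_nth:
  "length L = n \<Longrightarrow> perms n i L = map (nth L) (perms n i [0..<n])"
  using perms_map[of "[0..<n]" n i "nth L"] map_nth[of L] by simp

lemma perms_Cons: "perms (Suc n) (Suc i) (x # L) = x # perms n i L"
proof (induction "n - i" arbitrary: i L rule: less_induct)
  case less
  show ?case
  proof (cases "i < n - 1")
    case False
    then show ?thesis by (simp add: perms_eq_if_le)
  next
    case True
    then obtain n' where n: "n = Suc n'"
      by (cases n) auto
    let ?P = "perms n (Suc i)" and ?P' = "perms (Suc n) (Suc (Suc i))"
    let ?s = "\<lambda>M. if even (n - i) then move_elem i (n - 1) M else move_elem i (Suc i) M"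
    let ?s' = "\<lambda>M. if even (Suc n - Suc i) then move_elem (Suc i) (Suc n - 1) M
                   else move_elem (Suc i) (Suc (Suc i)) M"
    have P: "?P' (x # L) = x # ?P L" for L
      using less.hyps[of "Suc i"] True by simp
    have s: "?s' (x # L) = x # ?s L" for L
      by (simp add: n move_elem_Cons_Suc)
    have funpow_Cons: "((?P' \<circ> ?s') ^^ m) (x # L) = x # ((?P \<circ> ?s) ^^ m) L" for m L
      by (rule funpow_semiconj) (simp only: comp_apply P s)
    have "Suc i < Suc n - 1"
      using True by simp
    show ?thesis
      unfolding perms_unfold[OF True] perms_unfold[OF \<open>Suc i < Suc n - 1\<close>] Let_def
        P move_elem_Cons_Suc funpow_Cons
      by simp
  qed
qed

definition perms_round :: "nat \<Rightarrow> nat \<Rightarrow> 'a list \<Rightarrow> 'a list" where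
  "perms_round n i = move_elem i (Suc i) \<circ> perms n (Suc i)"

(* For odd n - i, every move in steps (2)-(4) swaps positions i and i + 1. *)
lemma perms_odd:
  assumes "odd (n - i)" "2 < n - i"
  shows "perms n i L = perms n (Suc i) ((perms_round n i ^^ (n - i - 1)) L)"
proof -
  let ?P = "perms n (Suc i)" and ?R = "perms_round n i"
  obtain m where m: "n - i = Suc (Suc (Suc m))"
    using assms(2) by (auto dest!: less_imp_Suc_add)
  have "i < n - 1"
    using m by simp
  have loop: "((?P \<circ> move_elem i (Suc i)) ^^ m) (?P y) = ?P ((?R ^^ m) y)" for y
    by (rule funpow_semiconj) (simp add: perms_round_def)
  have "perms n i L = ?P (move_elem i (Suc i) (((?P \<circ> move_elem i (Suc i)) ^^ m)
      (?P (move_elem i (Suc i) (?P L)))))"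
    using assms unfolding perms_unfold[OF \<open>i < n - 1\<close>] Let_def m by simp
  also have "\<dots> = ?P (?R ((?R ^^ m) (?R L)))"
    unfolding loop by (simp add: perms_round_def)
  finally show ?thesis
    unfolding funpow_Suc_Suc m by simp
qed

lemma perms_calls_odd:
  assumes "odd (n - i)" "2 < n - i"
  shows "perms_calls n i L = map (\<lambda>j. (perms_round n i ^^ j) L) [0..<n - i]"
proof -
  let ?R = "perms_round n i"
  obtain m where m: "n - i = Suc (Suc (Suc m))"
    using assms(2) by (auto dest!: less_imp_Suc_add)
  have "[0..<n - i] = 0 # map Suc [0..<Suc m] @ [Suc (Suc m)]"
    unfolding m by (simp add: map_Suc_upt upt_conv_Cons)
  then have "map (\<lambda>j. (?R ^^ j) L) [0..<n - i] =
      L # map (\<lambda>j. (?R ^^ j) (?R L)) [0..<Suc m] @ [?R ((?R ^^ m) (?R L))]"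
    by (simp add: funpow_swap1)
  then show ?thesis
    using assms(1) unfolding perms_calls_def Let_def m by (simp add: perms_round_def comp_def)
qed

lemma perms_1_upt: "perms (Suc n) (Suc 0) [0..<Suc n] = 0 # map Suc (last_perm [0..<n])"
proof -
  have "[0..<Suc n] = 0 # map Suc [0..<n]"
    by (simp add: map_Suc_upt upt_conv_Cons)
  then show ?thesis
    by (simp add: perms_Cons perms_map last_perm_def)
qed

lemma perms_round_eq_map_nth:
  assumes "Suc i < n" "length xs = n"
  shows "perms_round n i xs = map (nth xs) (perms_round n i [0..<n])"
  using assms
  by (simp add: perms_round_def perms_eq_map_nth[of xs] move_elem_map length_perms)

lemma perms_1_eq_swap_perms_round:
  assumes "Suc 0 < n" "length L = n"
  shows "perms n (Suc 0) L = move_elem 0 (Suc 0) (perms_round n 0 L)"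
  using assms by (simp add: perms_round_def move_elem_0_1_involutive length_perms)

lemma funpow_eq_map_funpow:
  assumes f: "\<And>xs. length xs = n \<Longrightarrow> f xs = map (nth xs) (f [0..<n])"
    and p: "f [0..<n] = map p [0..<n]" "\<And>i. i < n \<Longrightarrow> p i < n"
  shows "(f ^^ j) [0..<n] = map (p ^^ j) [0..<n]"
proof (induction j)
  case 0
  then show ?case by simp
next
  case (Suc j)
  have "(f ^^ Suc j) [0..<n] = map (nth (map (p ^^ j) [0..<n])) (map p [0..<n])"
    using Suc f[of "map (p ^^ j) [0..<n]"] p(1) by simp
  also have "\<dots> = map (p ^^ Suc j) [0..<n]"
    using p(2) by (simp add: funpow_swap1)
  finally show ?case .
qed

(* The permutation of positions performed by one round on k + 1 elements, read off from the
   hypothesis on last_perm [0..<k] in perms_round_upt. *)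
definition round_perm :: "nat \<Rightarrow> nat \<Rightarrow> nat" where
  "round_perm k i = (if i = 0 then 2 else if i = 1 then 0 else if i = 2 then 5 else if i = 3 then 4
     else if i = k - 1 then 3 else if i = k then 1 else i + 2)"

(* The orbit of 0 under round_perm k: 0, 2, 5, 7, ..., k - 1, 3, 4, 6, ..., k, 1. *)
definition round_orbit :: "nat \<Rightarrow> nat \<Rightarrow> nat" where
  "round_orbit k j = (if j = 0 then 0 else if j = 1 then 2 else if j < k div 2 then 2 * j + 1
     else if j = k div 2 then 3 else if j < k then 2 * (j - k div 2) + 2 else 1)"

lemma round_perm_le: "4 < k \<Longrightarrow> i \<le> k \<Longrightarrow> round_perm k i \<le> k"
  by (auto simp: round_perm_def)

lemma map_round_perm:
  assumes "even k" "4 < k"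
  shows "map (round_perm k) [0..<Suc k] = [2, 0, 5, 4] @ [6..<Suc k] @ [3, 1]"
proof -
  have "[0..<Suc (Suc (k - 1))] = [0..<k - 1] @ [k - 1, Suc (k - 1)]"
    by simp
  moreover have "[0..<4 + (k - 5)] = [0..<4] @ [4..<4 + (k - 5)]"
    by (rule upt_add_eq_append) simp
  moreover have "Suc (Suc (k - 1)) = Suc k" "Suc (k - 1) = k" "4 + (k - 5) = k - 1"
    using assms by simp_all
  moreover have "[0..<4] = [0, 1, 2, 3 :: nat]"
    by (simp add: eval_nat_numeral)
  ultimately have "[0..<Suc k] = [0, 1, 2, 3] @ [4..<k - 1] @ [k - 1, k]"
    by (metis append.assoc append_Cons append_Nil)
  moreover have "map (round_perm k) [4..<k - 1] = map Suc (map Suc [4..<k - 1])"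
    by (auto simp: round_perm_def)
  then have "map (round_perm k) [4..<k - 1] = [6..<Suc k]"
    using assms by (simp add: map_Suc_upt)
  ultimately show ?thesis
    using assms by (auto simp: round_perm_def)
qed

lemma round_perm_round_orbit:
  assumes "even k" "4 < k" "j < k"
  shows "round_perm k (round_orbit k j) = round_orbit k (Suc j)"
proof -
  obtain h where k: "k = 2 * h"
    using assms(1) by (rule evenE)
  with assms have h: "3 \<le> h"
    by simp
  consider "j \<le> 1" | "2 \<le> j" "j < h - 1" | "j = h - 1" | "j = h" | "h < j" "j < 2 * h - 1"
    | "j = 2 * h - 1"
    using assms(3) k by linarith
  then show ?thesis
    by cases (use h in \<open>auto simp: k round_perm_def round_orbit_def\<close>)
qed

lemma round_perm_round_orbit_last:
  assumes "even k" "4 < k"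
  shows "round_perm k (round_orbit k k) = 0"
proof -
  obtain h where "k = 2 * h"
    using assms(1) by (rule evenE)
  with assms show ?thesis
    unfolding round_perm_def round_orbit_def by auto
qed

lemma inj_on_round_orbit:
  assumes "even k" "4 < k"
  shows "inj_on (round_orbit k) {..k}"
proof -
  obtain h where k: "k = 2 * h"
    using assms(1) by (rule evenE)
  with assms have h: "3 \<le> h"
    by simp
  let ?index = "\<lambda>v. if v = 1 then k else if v = 3 then h else if v \<le> 2 then v div 2
      else if odd v then v div 2 else v div 2 - 1 + h"
  have "?index (round_orbit k j) = j" if j: "j \<le> k" for j
  proof -
    consider "j \<le> 1" | "2 \<le> j" "j < h" | "j = h" | "h < j" "j < 2 * h" | "j = 2 * h"
      using j k by linarith
    then show ?thesis
      by cases (use h in \<open>auto simp: k round_orbit_def\<close>)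
  qed
  then show ?thesis
    by (intro inj_on_inverseI[where g = ?index]) simp
qed

lemma round_orbit_le: "even k \<Longrightarrow> j \<le> k \<Longrightarrow> round_orbit k j \<le> k"
  by (auto simp: round_orbit_def elim!: evenE)

lemma funpow_round_perm_0:
  assumes "even k" "4 < k" "j \<le> k"
  shows "(round_perm k ^^ j) 0 = round_orbit k j"
  using assms(3)
proof (induction j)
  case 0
  then show ?case by (simp add: round_orbit_def)
next
  case (Suc j)
  then show ?case
    using round_perm_round_orbit[OF assms(1,2)] by simp
qed

lemma funpow_round_perm_period:
  assumes "even k" "4 < k" "i \<le> k"
  shows "(round_perm k ^^ Suc k) i = i"
proof -
  have "round_orbit k ` {..k} = {..k}"
    using round_orbit_le[OF assms(1)] inj_on_round_orbit[OF assms(1,2)]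
    by (intro endo_inj_surj) auto
  then obtain j where j: "j \<le> k" "i = (round_perm k ^^ j) 0"
    using assms funpow_round_perm_0 by (metis atMost_iff imageE)
  have "(round_perm k ^^ Suc k) 0 = 0"
    using funpow_round_perm_0[OF assms(1,2) order_refl] round_perm_round_orbit_last[OF assms(1,2)]
    by simp
  then show ?thesis
    unfolding j(2) by (metis funpow_add add.commute comp_apply)
qed

lemma perms_round_upt:
  assumes "even k" "4 < k" "last_perm [0..<k] = [1, 4, 3] @ [5..<k] @ [2, 0]"
  shows "perms_round (Suc k) 0 [0..<Suc k] = map (round_perm k) [0..<Suc k]"
proof -
  have "map Suc ([1, 4, 3] @ [5..<k] @ [2, 0]) = [2, 5, 4] @ [6..<Suc k] @ [3, 1]"
    by (simp add: map_Suc_upt)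
  then show ?thesis
    using assms
    by (simp add: perms_round_def perms_1_upt move_elem_0_1 map_round_perm del: upt_Suc)
qed

lemma funpow_perms_round_upt:
  assumes "even k" "4 < k" "last_perm [0..<k] = [1, 4, 3] @ [5..<k] @ [2, 0]"
  shows "(perms_round (Suc k) 0 ^^ j) [0..<Suc k] = map (round_perm k ^^ j) [0..<Suc k]"
  using perms_round_eq_map_nth[of 0 "Suc k"] perms_round_upt[OF assms] round_perm_le[OF assms(2)]
    assms(2)
  by (intro funpow_eq_map_funpow) (simp_all add: less_Suc_eq_le del: upt_Suc)

theorem lemma2:
  fixes k :: nat
  assumes "even k" and "k > 4"
    and "last_perm [0..<k] = [1, 4, 3] @ [5..<k] @ [2, 0]"
  shows "length (perms_calls (k + 1) 0 [0..<k + 1]) = k + 1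
       \<and> distinct (map hd (perms_calls (k + 1) 0 [0..<k + 1]))
       \<and> last_perm [0..<k + 1] = [1, 0] @ [2..<k + 1]"
proof -
  let ?R = "perms_round (Suc k) 0" and ?L = "[0..<Suc k]"
  have odd_top: "odd (Suc k - 0)" "2 < Suc k - 0"
    using assms by simp_all
  note rounds = funpow_perms_round_upt[OF assms]
  have calls: "perms_calls (Suc k) 0 ?L = map (\<lambda>j. map (round_perm k ^^ j) ?L) [0..<Suc k]"
    by (simp only: perms_calls_odd[OF odd_top] diff_zero rounds)
  have "map hd (perms_calls (Suc k) 0 ?L) = map (round_orbit k) [0..<Suc k]"
    unfolding calls by (simp add: hd_map funpow_round_perm_0[OF assms(1,2)] del: upt_Suc)
  then have distinct_heads: "distinct (map hd (perms_calls (Suc k) 0 ?L))"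
    using inj_on_round_orbit[OF assms(1,2)]
    by (simp add: distinct_map lessThan_Suc_atMost atLeast0LessThan del: upt_Suc)
  have "last_perm ?L = perms (Suc k) (Suc 0) ((?R ^^ k) ?L)"
    using perms_odd[OF odd_top] by (simp add: last_perm_def)
  also have "\<dots> = move_elem 0 (Suc 0) ((?R ^^ Suc k) ?L)"
    using assms(2) by (simp add: perms_1_eq_swap_perms_round rounds del: upt_Suc)
  also have "(?R ^^ Suc k) ?L = ?L"
    unfolding rounds by (intro map_idI funpow_round_perm_period[OF assms(1,2)]) auto
  also have "move_elem 0 (Suc 0) ?L = [1, 0] @ [2..<Suc k]"
    using assms(2)
    by (simp add: upt_rec[of 0] upt_rec[of "Suc 0"] move_elem_0_1 numeral_2_eq_2 del: upt_Suc)
  finally show ?thesis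
    using calls distinct_heads by simp
qed

end
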